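(* Let $V\geq 0$ be a nonsingular potential on $(-\infty,0]$ (as defined in the context). Let $\gamma_c>0$ be the critical value such that ${}^{\gamma}\mathcal{H}$ (with $\gamma>0$) has a negative eigenvalue exactly when $\gamma>\gamma_c$, and for $\gamma>\gamma_c$ let $E_\gamma<0$ denote this (unique) negative eigenvalue. Assume that $\lim_{\gamma\to\gamma_c^+}E_\gamma=0$. Then $$\gamma_c\leq\int_{-\infty}^0 V(x)\,dx.$$
   Context: A potential $V$ is called nonsingular if: $V$ is continuous on $(-\infty,0]$; as $x\to-\infty$ it decays exponentially, $V(x)=e^{\kappa x}\,(U+O(e^{\kappa x}))$ for some constants $\kappa>0$, $U\neq 0$; and near $x=0$ it has an expansion $V(x)=v_0+v_1x+v_2x^2+\dots$ with $v_0\neq 0$. For $\mathcal{H}=-\frac{d^2}{dx^2}+V(x)$ on $x<0$ in $L^2((-\infty,0),dx)$ and real $\gamma\neq0$, ${}^{\gamma}\mathcal{H}$ is the self-adjoint realization with Robin boundary condition $\psi'(0)=\gamma\psi(0)$. *)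

theory Defs
  imports "HOL-Analysis.Analysis" "HOL-Library.Landau_Symbols"
begin

definition nonsingular_potential :: "(real \<Rightarrow> real) \<Rightarrow> bool" where
  "nonsingular_potential V \<longleftrightarrow>
     continuous_on {..0} V \<and>
     (\<exists>\<kappa> U. \<kappa> > 0 \<and> U \<noteq> 0 \<and>
        (\<lambda>x. V x - exp (\<kappa> * x) * U) \<in> O[at_bot](\<lambda>x. exp (2 * \<kappa> * x))) \<and>
     (\<exists>v :: nat \<Rightarrow> real. v 0 \<noteq> 0 \<and>
        (\<forall>n. (\<lambda>x. V x - (\<Sum>k<n. v k * x ^ k)) \<in> O[at_left 0](\<lambda>x. x ^ n)))"

definition square_integrable_neg :: "(real \<Rightarrow> real) \<Rightarrow> bool" where
  "square_integrable_neg f \<longleftrightarrow> set_integrable lborel {..<0} (\<lambda>x. (f x)^2)"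

text \<open>E is an eigenvalue of the Robin realization of -d^2/dx^2 + V on x<0 with
  boundary condition psi'(0) = gamma psi(0): there is a nonzero eigenfunction psi
  in the operator domain (psi, psi', psi'' square integrable, C^2 up to 0) solving
  -psi'' + V psi = E psi on x < 0.\<close>
definition robin_eigenvalue :: "(real \<Rightarrow> real) \<Rightarrow> real \<Rightarrow> real \<Rightarrow> bool" where
  "robin_eigenvalue V \<gamma> E \<longleftrightarrow>
     (\<exists>\<psi> \<psi>' \<psi>'' :: real \<Rightarrow> real.
        (\<forall>x\<le>0. (\<psi> has_real_derivative \<psi>' x) (at x within {..0})) \<and>
        (\<forall>x\<le>0. (\<psi>' has_real_derivative \<psi>'' x) (at x within {..0})) \<and>
        continuous_on {..0} \<psi>'' \<and>
        square_integrable_neg \<psi> \<and> square_integrable_neg \<psi>' \<and> square_integrable_neg \<psi>'' \<and>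
        (\<exists>x<0. \<psi> x \<noteq> 0) \<and>
        (\<forall>x<0. - \<psi>'' x + V x * \<psi> x = E * \<psi> x) \<and>
        \<psi>' 0 = \<gamma> * \<psi> 0)"

end

theory Submission
  imports Defs "HOL-Real_Asymp.Real_Asymp"
begin

text \<open>For a negative eigenvalue \<open>E = -k\<^sup>2\<close> with eigenfunction \<open>\<psi>\<close>, the sign of \<open>V\<close> makes
  \<open>\<psi> \<psi>'\<close> and \<open>\<psi>'\<^sup>2 - k\<^sup>2 \<psi>\<^sup>2\<close> nondecreasing on \<open>x < 0\<close>, and square integrability forces
  both to be nonnegative. Hence \<open>\<psi>\<^sup>2 exp (-2 k x)\<close> is nondecreasing, so
  \<open>|\<psi> x| \<le> |\<psi> 0| exp (k x)\<close> and \<open>\<psi> 0 \<noteq> 0\<close>. Integrating \<open>\<psi>'' = (V + k\<^sup>2) \<psi>\<close> from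
  points where \<open>\<psi>'\<close> is arbitrarily small up to \<open>0\<close> and inserting the Robin condition gives
  \<open>\<gamma> \<le> \<integral>V + k = \<integral>V + sqrt (-E\<^sub>\<gamma>)\<close>; now let \<open>\<gamma>\<close> decrease to \<open>\<gamma>c\<close>.\<close>

lemma set_integrable_exp_atMost:
  fixes \<kappa> a :: real
  assumes "\<kappa> > 0"
  shows "set_integrable lborel {..a} (\<lambda>x. exp (\<kappa> * x))"
proof -
  let ?F = "\<lambda>x. exp (\<kappa> * x) / \<kappa>"
  have "set_integrable lborel (einterval (-\<infinity>) (a + 1)) (\<lambda>x. exp (\<kappa> * x))"
  proof (rule interval_integral_FTC_nonneg[where F = ?F and A = 0 and B = "?F (a + 1)"])
    show "DERIV ?F x :> exp (\<kappa> * x)" for x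
      using assms by (auto intro!: derivative_eq_intros)
    have "(?F \<longlongrightarrow> 0) at_bot"
      using assms by real_asymp
    then show "((?F \<circ> real_of_ereal) \<longlongrightarrow> 0) (at_right (- \<infinity>))"
      by (simp add: ereal_tendsto_simps)
    have "(?F \<longlongrightarrow> ?F (a + 1)) (at_left (a + 1))"
      using assms by (intro tendsto_intros) auto
    then show "((?F \<circ> real_of_ereal) \<longlongrightarrow> ?F (a + 1)) (at_left (ereal (a + 1)))"
      by (simp add: ereal_tendsto_simps)
  qed auto
  then show ?thesis
    by (rule set_integrable_subset) (auto simp: einterval_def)
qed

lemma continuous_on_atMost_bounded_if_eventually_bounded:
  fixes g :: "real \<Rightarrow> real"
  assumes cont: "continuous_on {..a} g" and bounded_at_bot: "eventually (\<lambda>x. \<bar>g x\<bar> \<le> C) at_bot"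
  obtains B where "\<And>x. x \<le> a \<Longrightarrow> \<bar>g x\<bar> \<le> B"
proof -
  obtain N where N: "\<And>x. x \<le> N \<Longrightarrow> \<bar>g x\<bar> \<le> C"
    using bounded_at_bot unfolding eventually_at_bot_linorder by blast
  have "compact (g ` {min N a..a})"
    by (intro compact_continuous_image continuous_on_subset[OF cont]) auto
  then obtain M where M: "\<And>x. x \<in> {min N a..a} \<Longrightarrow> \<bar>g x\<bar> \<le> M"
    unfolding bounded_real by (meson compact_imp_bounded bounded_real image_eqI)
  have "\<bar>g x\<bar> \<le> max C M" if "x \<le> a" for x
    using N[of x] M[of x] that by (cases "x \<le> N") auto
  then show thesis by (rule that)
qed

lemma nonsingular_potential_exp_bound:
  assumes "nonsingular_potential V"
  obtains \<kappa> B where "\<kappa> > 0" and "\<And>x. x \<le> 0 \<Longrightarrow> \<bar>V x\<bar> \<le> B * exp (\<kappa> * x)"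
proof -
  obtain \<kappa> U where \<kappa>: "\<kappa> > 0" and V_asymp: "(\<lambda>x. V x - exp (\<kappa> * x) * U) \<in> O[at_bot](\<lambda>x. exp (2 * \<kappa> * x))"
    and cont: "continuous_on {..0} V"
    using assms unfolding nonsingular_potential_def by blast
  obtain c where c: "c > 0" and V_close: "eventually (\<lambda>x. \<bar>V x - exp (\<kappa> * x) * U\<bar> \<le> c * exp (2 * \<kappa> * x)) at_bot"
    using V_asymp by (elim landau_o.bigE) auto
  have "eventually (\<lambda>x. \<bar>V x * exp (- \<kappa> * x)\<bar> \<le> \<bar>U\<bar> + c) at_bot"
    using V_close eventually_le_at_bot[of 0]
  proof eventually_elim
    case (elim x)
    then have bound: "\<bar>V x - exp (\<kappa> * x) * U\<bar> \<le> c * exp (2 * \<kappa> * x)" and x: "x \<le> 0"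
      by auto
    have "V x * exp (- \<kappa> * x) - U = (V x - exp (\<kappa> * x) * U) * exp (- \<kappa> * x)"
      by (simp add: algebra_simps exp_minus_inverse)
    then have "\<bar>V x * exp (- \<kappa> * x) - U\<bar> = \<bar>V x - exp (\<kappa> * x) * U\<bar> * exp (- \<kappa> * x)"
      by (simp add: abs_mult)
    also have "\<dots> \<le> c * exp (2 * \<kappa> * x) * exp (- \<kappa> * x)"
      using bound by (simp add: mult_right_mono)
    also have "\<dots> = c * exp (\<kappa> * x)"
      by (simp add: mult.assoc flip: exp_add)
    also have "\<dots> \<le> c"
      using c \<kappa> x by (simp add: mult_nonneg_nonpos)
    finally show "\<bar>V x * exp (- \<kappa> * x)\<bar> \<le> \<bar>U\<bar> + c" by linarith
  qed
  moreover have "continuous_on {..0} (\<lambda>x. V x * exp (- \<kappa> * x))"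
    by (intro continuous_intros cont)
  ultimately obtain B where B: "\<And>x. x \<le> 0 \<Longrightarrow> \<bar>V x * exp (- \<kappa> * x)\<bar> \<le> B"
    using continuous_on_atMost_bounded_if_eventually_bounded by blast
  have "\<bar>V x\<bar> \<le> B * exp (\<kappa> * x)" if "x \<le> 0" for x
  proof -
    have "\<bar>V x\<bar> = \<bar>V x * exp (- \<kappa> * x)\<bar> * exp (\<kappa> * x)"
      by (simp add: abs_mult mult.assoc flip: exp_add)
    then show ?thesis using B[OF that] by (simp add: mult_right_mono)
  qed
  with \<kappa> show thesis by (rule that)
qed

lemma nonsingular_potential_set_integrable:
  assumes "nonsingular_potential V"
  shows "set_integrable lborel {..0} V"
proof -
  obtain \<kappa> B where \<kappa>: "\<kappa> > 0" and bound: "\<And>x. x \<le> 0 \<Longrightarrow> \<bar>V x\<bar> \<le> B * exp (\<kappa> * x)"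
    using nonsingular_potential_exp_bound[OF assms] by blast
  have cont: "continuous_on {..0} V"
    using assms unfolding nonsingular_potential_def by blast
  show ?thesis
  proof (rule set_integrable_bound)
    show "set_integrable lborel {..0} (\<lambda>x. B * exp (\<kappa> * x))"
      using set_integrable_exp_atMost[OF \<kappa>] by (rule set_integrable_mult_right)
    show "set_borel_measurable lborel {..0} V"
      unfolding set_borel_measurable_def
      using borel_measurable_continuous_on_indicator[OF _ cont] by simp
    show "AE x in lborel. x \<in> {..0} \<longrightarrow> norm (V x) \<le> norm (B * exp (\<kappa> * x))"
      using bound by (auto intro!: AE_I2 order_trans[OF _ abs_ge_self])
  qed
qed

lemma emeasure_lborel_atMost: "emeasure lborel {..a :: real} = \<infinity>"
proof (rule ccontr)
  assume "emeasure lborel {..a} \<noteq> \<infinity>"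
  then obtain r where r: "emeasure lborel {..a} = ennreal r" "r \<ge> 0"
    by (cases "emeasure lborel {..a}") auto
  have "emeasure lborel {a - (r + 1)..a} \<le> emeasure lborel {..a}"
    by (intro emeasure_mono) auto
  with r show False by (simp add: ennreal_le_iff)
qed

lemma not_set_integrable_if_eventually_ge:
  fixes f :: "real \<Rightarrow> real"
  assumes c: "c > 0" and ge: "eventually (\<lambda>x. c \<le> f x) at_bot"
  shows "\<not> set_integrable lborel {..<b} f"
proof
  assume f_int: "set_integrable lborel {..<b} f"
  obtain N where N: "\<And>x. x \<le> N \<Longrightarrow> c \<le> f x"
    using ge unfolding eventually_at_bot_linorder by blast
  define a where "a = min N (b - 1)"
  have "set_integrable lborel {..a} f"
    by (rule set_integrable_subset[OF f_int]) (auto simp: a_def)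
  then have "set_integrable lborel {..a} (\<lambda>_. c)"
    by (rule set_integrable_bound)
      (use N c in \<open>auto simp: a_def set_borel_measurable_def intro!: AE_I2 order_trans[OF _ abs_ge_self]\<close>)
  then have "set_integrable lborel {..a} (\<lambda>_. (1 / c) * c)"
    by (rule set_integrable_mult_right)
  then have "integrable lborel (indicator {..a} :: real \<Rightarrow> real)"
    using c by (simp add: set_integrable_def)
  then show False
    by (simp add: integrable_indicator_iff emeasure_lborel_atMost)
qed

lemma nonneg_if_deriv_nonneg_and_integrable_bound:
  fixes g g' f :: "real \<Rightarrow> real"
  assumes deriv: "\<And>t. t < 0 \<Longrightarrow> (g has_real_derivative g' t) (at t)"
    and deriv_nonneg: "\<And>t. t < 0 \<Longrightarrow> 0 \<le> g' t"
    and bound: "\<And>t. t < 0 \<Longrightarrow> - g t \<le> f t"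
    and f_int: "set_integrable lborel {..<0} f"
    and x: "x < 0"
  shows "0 \<le> g x"
proof (rule ccontr)
  assume "\<not> 0 \<le> g x"
  have mono: "g y \<le> g x" if "y \<le> x" for y
  proof (rule DERIV_nonneg_imp_nondecreasing[OF that])
    fix t assume "t \<le> x"
    with x have "t < 0" by linarith
    with deriv deriv_nonneg show "\<exists>d. (g has_real_derivative d) (at t) \<and> 0 \<le> d"
      by blast
  qed
  have "eventually (\<lambda>y. - g x \<le> f y) at_bot"
    unfolding eventually_at_bot_linorder
  proof (intro exI allI impI)
    fix y assume "y \<le> x"
    with mono[of y] bound[of y] x show "- g x \<le> f y" by linarith
  qed
  with \<open>\<not> 0 \<le> g x\<close> f_int show False
    using not_set_integrable_if_eventually_ge[of "- g x" f] by simp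
qed

locale bound_state =
  fixes V :: "real \<Rightarrow> real" and k :: real and p p' :: "real \<Rightarrow> real"
  assumes k_pos: "k > 0"
    and V_nonneg: "\<And>x. x \<le> 0 \<Longrightarrow> 0 \<le> V x"
    and has_derivative_p: "\<And>x. x < 0 \<Longrightarrow> (p has_real_derivative p' x) (at x)"
    and schroedinger: "\<And>x. x < 0 \<Longrightarrow> (p' has_real_derivative (V x + k\<^sup>2) * p x) (at x)"
    and continuous_p: "continuous_on {..0} p"
    and continuous_p': "continuous_on {..0} p'"
    and square_integrable_p: "square_integrable_neg p"
    and square_integrable_p': "square_integrable_neg p'"
begin

lemma p_mult_p'_nonneg:
  assumes "x < 0"
  shows "0 \<le> p x * p' x"
proof (rule nonneg_if_deriv_nonneg_and_integrable_bound[where g = "\<lambda>x. p x * p' x"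
      and g' = "\<lambda>t. (p' t)\<^sup>2 + (V t + k\<^sup>2) * (p t)\<^sup>2" and f = "\<lambda>t. (p t)\<^sup>2 + (p' t)\<^sup>2"])
  show "((\<lambda>x. p x * p' x) has_real_derivative (p' t)\<^sup>2 + (V t + k\<^sup>2) * (p t)\<^sup>2) (at t)"
    if "t < 0" for t
    using has_derivative_p[OF that] schroedinger[OF that]
    by (auto intro!: derivative_eq_intros simp: power2_eq_square algebra_simps)
  show "0 \<le> (p' t)\<^sup>2 + (V t + k\<^sup>2) * (p t)\<^sup>2" if "t < 0" for t
    using V_nonneg[of t] that by simp
  show "- (p t * p' t) \<le> (p t)\<^sup>2 + (p' t)\<^sup>2" for t
    using zero_le_power2[of "p t + p' t"] zero_le_power2[of "p t"] zero_le_power2[of "p' t"]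
    unfolding power2_sum mult.assoc by linarith
  show "set_integrable lborel {..<0} (\<lambda>t. (p t)\<^sup>2 + (p' t)\<^sup>2)"
    using square_integrable_p square_integrable_p'
    unfolding square_integrable_neg_def by (rule set_integral_add(1))
qed fact

lemma k_abs_p_le_abs_p':
  assumes "x < 0"
  shows "k * \<bar>p x\<bar> \<le> \<bar>p' x\<bar>"
proof -
  have "0 \<le> (p' x)\<^sup>2 - k\<^sup>2 * (p x)\<^sup>2"
  proof (rule nonneg_if_deriv_nonneg_and_integrable_bound[where g = "\<lambda>x. (p' x)\<^sup>2 - k\<^sup>2 * (p x)\<^sup>2"
        and g' = "\<lambda>t. 2 * V t * (p t * p' t)" and f = "\<lambda>t. k\<^sup>2 * (p t)\<^sup>2"])
    show "((\<lambda>x. (p' x)\<^sup>2 - k\<^sup>2 * (p x)\<^sup>2) has_real_derivative 2 * V t * (p t * p' t)) (at t)"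
      if "t < 0" for t
      using has_derivative_p[OF that] schroedinger[OF that]
      by (auto intro!: derivative_eq_intros simp: power2_eq_square algebra_simps)
    show "0 \<le> 2 * V t * (p t * p' t)" if "t < 0" for t
      using V_nonneg[of t] p_mult_p'_nonneg[OF that] that by simp
    show "- ((p' t)\<^sup>2 - k\<^sup>2 * (p t)\<^sup>2) \<le> k\<^sup>2 * (p t)\<^sup>2" for t
      by simp
    show "set_integrable lborel {..<0} (\<lambda>t. k\<^sup>2 * (p t)\<^sup>2)"
      using square_integrable_p unfolding square_integrable_neg_def
      by (rule set_integrable_mult_right)
  qed fact
  then have "(k * \<bar>p x\<bar>)\<^sup>2 \<le> \<bar>p' x\<bar>\<^sup>2"
    by (simp add: power_mult_distrib)
  then show ?thesis
    using power2_le_imp_le[of "k * \<bar>p x\<bar>" "\<bar>p' x\<bar>"] by simp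
qed

lemma abs_p_le_exp:
  assumes "x \<le> 0"
  shows "\<bar>p x\<bar> \<le> \<bar>p 0\<bar> * exp (k * x)"
proof -
  define w where "w t = (p t)\<^sup>2 * exp (- 2 * k * t)" for t
  have "w x \<le> w 0"
    using assms
  proof (rule DERIV_nonneg_imp_increasing_open)
    fix t assume t: "x < t" "t < 0"
    have "(w has_real_derivative 2 * (p t * p' t - k * (p t)\<^sup>2) * exp (- 2 * k * t)) (at t)"
      unfolding w_def using has_derivative_p[of t] t
      by (auto intro!: derivative_eq_intros simp: power2_eq_square algebra_simps)
    moreover have "k * (p t)\<^sup>2 \<le> p t * p' t"
    proof -
      have "k * \<bar>p t\<bar> * \<bar>p t\<bar> \<le> \<bar>p' t\<bar> * \<bar>p t\<bar>"
        using k_abs_p_le_abs_p'[of t] t by (simp add: mult_right_mono)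
      also have "\<dots> = p t * p' t"
        using p_mult_p'_nonneg[of t] t by (simp add: abs_mult [symmetric] mult.commute)
      finally show ?thesis
        by (simp add: power2_eq_square mult.assoc)
    qed
    ultimately show "\<exists>d. (w has_real_derivative d) (at t) \<and> 0 \<le> d"
      by fastforce
  next
    show "continuous_on {x..0} w"
      unfolding w_def by (intro continuous_intros continuous_on_subset[OF continuous_p]) auto
  qed
  then have "(p x)\<^sup>2 \<le> (p 0)\<^sup>2 * exp (2 * k * x)"
    unfolding w_def by (simp add: exp_minus field_simps)
  also have "\<dots> = (\<bar>p 0\<bar> * exp (k * x))\<^sup>2"
    by (simp add: power_mult_distrib flip: exp_of_nat_mult)
  finally show ?thesis
    using power2_le_imp_le[of "\<bar>p x\<bar>"] by simp
qed

lemma p'_arbitrarily_small: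
  assumes "\<epsilon> > 0"
  shows "\<exists>a<0. \<bar>p' a\<bar> < \<epsilon>"
proof (rule ccontr)
  assume "\<not> (\<exists>a<0. \<bar>p' a\<bar> < \<epsilon>)"
  then have ge: "\<epsilon>\<^sup>2 \<le> (p' a)\<^sup>2" if "a < 0" for a
  proof -
    have "\<epsilon> \<le> \<bar>p' a\<bar>"
      using that \<open>\<not> (\<exists>a<0. \<bar>p' a\<bar> < \<epsilon>)\<close> by force
    then have "\<epsilon>\<^sup>2 \<le> \<bar>p' a\<bar>\<^sup>2"
      using assms by (intro power_mono) auto
    then show ?thesis
      by simp
  qed
  have "eventually (\<lambda>a. \<epsilon>\<^sup>2 \<le> (p' a)\<^sup>2) at_bot"
    by (rule eventually_mono[OF eventually_gt_at_bot[of 0] ge])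
  with assms square_integrable_p' show False
    using not_set_integrable_if_eventually_ge[of "\<epsilon>\<^sup>2"]
    unfolding square_integrable_neg_def by simp
qed

lemma has_integral_p'':
  assumes "a \<le> 0"
  shows "((\<lambda>x. (V x + k\<^sup>2) * p x) has_integral p' 0 - p' a) {a..0}"
proof (rule fundamental_theorem_of_calculus_interior)
  show "continuous_on {a..0} p'"
    by (rule continuous_on_subset[OF continuous_p']) auto
  show "(p' has_vector_derivative (V x + k\<^sup>2) * p x) (at x)" if "x \<in> {a<..<0}" for x
    using schroedinger[of x] that by (simp add: has_real_derivative_iff_has_vector_derivative)
qed fact

lemma abs_p''_le:
  assumes x: "x \<le> 0"
  shows "\<bar>(V x + k\<^sup>2) * p x\<bar> \<le> \<bar>p 0\<bar> * (V x + k\<^sup>2 * exp (k * x))"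
proof -
  have V_x: "0 \<le> V x" and exp_le: "exp (k * x) \<le> 1"
    using x V_nonneg k_pos by (auto simp: mult_nonneg_nonpos)
  have "\<bar>(V x + k\<^sup>2) * p x\<bar> = (V x + k\<^sup>2) * \<bar>p x\<bar>"
    using V_x by (simp add: abs_mult)
  also have "\<dots> \<le> (V x + k\<^sup>2) * (\<bar>p 0\<bar> * exp (k * x))"
    using abs_p_le_exp[OF x] V_x by (intro mult_left_mono) auto
  also have "\<dots> = \<bar>p 0\<bar> * (V x * exp (k * x) + k\<^sup>2 * exp (k * x))"
    by (simp add: algebra_simps)
  also have "\<dots> \<le> \<bar>p 0\<bar> * (V x + k\<^sup>2 * exp (k * x))"
    using exp_le V_x by (intro mult_left_mono add_right_mono) (auto simp: mult_left_le)
  finally show ?thesis .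
qed

lemma abs_p'_diff_le:
  assumes V_int: "set_integrable lborel {..0} V" and a: "a < 0"
  shows "\<bar>p' 0 - p' a\<bar> \<le> \<bar>p 0\<bar> * ((LINT x:{..0}|lborel. V x) + k)"
proof -
  define G where "G x = \<bar>p 0\<bar> * (V x + k\<^sup>2 * exp (k * x))" for x
  have q_int: "((\<lambda>x. (V x + k\<^sup>2) * p x) has_integral p' 0 - p' a) {a..0}"
    using a by (intro has_integral_p'') simp
  have V_int_on: "V integrable_on {..0}" and integral_V: "(LINT x:{..0}|lborel. V x) = integral {..0} V"
    using set_borel_integral_eq_integral[OF V_int] by auto
  have V_int_ab: "V integrable_on {a..0}"
    using V_int_on by (rule integrable_on_subinterval) auto
  have "((\<lambda>x. k\<^sup>2 * exp (k * x)) has_integral k * exp (k * 0) - k * exp (k * a)) {a..0}"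
    using a by (intro fundamental_theorem_of_calculus)
      (auto intro!: derivative_eq_intros simp: power2_eq_square simp flip: has_real_derivative_iff_has_vector_derivative)
  then have G_int: "(G has_integral \<bar>p 0\<bar> * (integral {a..0} V + (k - k * exp (k * a)))) {a..0}"
    unfolding G_def by (intro has_integral_mult_right has_integral_add integrable_integral V_int_ab) simp
  have "\<bar>p' 0 - p' a\<bar> = norm (integral {a..0} (\<lambda>x. (V x + k\<^sup>2) * p x))"
    using integral_unique[OF q_int] by simp
  also have "\<dots> \<le> integral {a..0} G"
    using has_integral_integrable[OF q_int] has_integral_integrable[OF G_int]
    by (rule integral_norm_bound_integral) (use abs_p''_le in \<open>simp add: G_def\<close>)
  also have "\<dots> \<le> \<bar>p 0\<bar> * ((LINT x:{..0}|lborel. V x) + k)"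
  proof -
    have "integral {a..0} V \<le> integral {..0} V"
      using V_int_ab V_int_on V_nonneg by (intro integral_subset_le) auto
    moreover have "k - k * exp (k * a) \<le> k"
      using k_pos by simp
    ultimately show ?thesis
      unfolding integral_unique[OF G_int] integral_V by (intro mult_left_mono) auto
  qed
  finally show ?thesis .
qed

lemma abs_p'_0_le:
  assumes "set_integrable lborel {..0} V"
  shows "\<bar>p' 0\<bar> \<le> \<bar>p 0\<bar> * ((LINT x:{..0}|lborel. V x) + k)"
proof (rule field_le_epsilon)
  fix \<epsilon> :: real assume "\<epsilon> > 0"
  then obtain a where "a < 0" and "\<bar>p' a\<bar> < \<epsilon>"
    using p'_arbitrarily_small by blast
  have "\<bar>p' 0\<bar> \<le> \<bar>p' a\<bar> + \<bar>p' 0 - p' a\<bar>"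
    using abs_triangle_ineq[of "p' a" "p' 0 - p' a"] by simp
  with \<open>\<bar>p' a\<bar> < \<epsilon>\<close> abs_p'_diff_le[OF assms \<open>a < 0\<close>]
  show "\<bar>p' 0\<bar> \<le> \<bar>p 0\<bar> * ((LINT x:{..0}|lborel. V x) + k) + \<epsilon>"
    by linarith
qed

end

lemma robin_negative_eigenvalue_bound:
  fixes V :: "real \<Rightarrow> real"
  assumes V_nonneg: "\<forall>x\<le>0. V x \<ge> 0" and V_int: "set_integrable lborel {..0} V"
    and E_neg: "E < 0" and eigenvalue: "robin_eigenvalue V \<gamma> E"
  shows "\<gamma> \<le> (LINT x:{..0}|lborel. V x) + sqrt (- E)"
proof -
  define k where "k = sqrt (- E)"
  have k_pos: "k > 0" and E_eq: "E = - k\<^sup>2"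
    using E_neg by (auto simp: k_def)
  obtain \<psi> \<psi>' \<psi>'' where
    deriv: "\<forall>x\<le>0. (\<psi> has_real_derivative \<psi>' x) (at x within {..0})" and
    deriv': "\<forall>x\<le>0. (\<psi>' has_real_derivative \<psi>'' x) (at x within {..0})" and
    square_integrable: "square_integrable_neg \<psi>" "square_integrable_neg \<psi>'" and
    nontrivial: "\<exists>x<0. \<psi> x \<noteq> 0" and
    equation: "\<forall>x<0. - \<psi>'' x + V x * \<psi> x = E * \<psi> x" and
    boundary: "\<psi>' 0 = \<gamma> * \<psi> 0"
    using eigenvalue unfolding robin_eigenvalue_def by blast
  have at_interior: "at x within {..0} = at x" if "x < 0" for x :: real
    using that by (intro at_within_interior) (simp add: interior_Iic)
  interpret bound_state V k \<psi> \<psi>'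
  proof
    show "(\<psi> has_real_derivative \<psi>' x) (at x)" if "x < 0" for x
      using deriv[rule_format, of x] that by (simp add: at_interior)
    show "(\<psi>' has_real_derivative (V x + k\<^sup>2) * \<psi> x) (at x)" if "x < 0" for x
    proof -
      have "\<psi>'' x = (V x + k\<^sup>2) * \<psi> x"
        using equation that by (simp add: E_eq algebra_simps)
      then show ?thesis
        using deriv'[rule_format, of x] that by (simp add: at_interior)
    qed
    show "continuous_on {..0} \<psi>" "continuous_on {..0} \<psi>'"
      using deriv deriv' by (auto simp: continuous_on_eq_continuous_within intro: DERIV_continuous)
  qed (use k_pos V_nonneg square_integrable in auto)
  have "\<psi> 0 \<noteq> 0"
  proof
    assume "\<psi> 0 = 0"
    obtain x where "x < 0" "\<psi> x \<noteq> 0"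
      using nontrivial by blast
    with abs_p_le_exp[of x] \<open>\<psi> 0 = 0\<close> show False
      by simp
  qed
  have "\<bar>\<psi> 0\<bar> * \<gamma> \<le> \<bar>\<psi>' 0\<bar>"
    by (simp add: boundary abs_mult mult.commute mult_right_mono)
  also have "\<dots> \<le> \<bar>\<psi> 0\<bar> * ((LINT x:{..0}|lborel. V x) + k)"
    by (rule abs_p'_0_le[OF V_int])
  finally show ?thesis
    using \<open>\<psi> 0 \<noteq> 0\<close> by (simp add: k_def)
qed

theorem proposition6:
  fixes V :: "real \<Rightarrow> real" and \<gamma>c :: real and E :: "real \<Rightarrow> real"
  assumes nonsing: "nonsingular_potential V"
    and nonneg: "\<forall>x\<le>0. V x \<ge> 0"
    and gc_pos: "\<gamma>c > 0"
    and critical: "\<forall>\<gamma>>0. (\<exists>e<0. robin_eigenvalue V \<gamma> e) \<longleftrightarrow> \<gamma> > \<gamma>c"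
    and E_eig: "\<forall>\<gamma>>\<gamma>c. E \<gamma> < 0 \<and> robin_eigenvalue V \<gamma> (E \<gamma>)
                   \<and> (\<forall>e<0. robin_eigenvalue V \<gamma> e \<longrightarrow> e = E \<gamma>)"
    and E_lim: "(E \<longlongrightarrow> 0) (at_right \<gamma>c)"
  shows "\<gamma>c \<le> (LINT x:{..0}|lborel. V x)"
proof -
  define I where "I = (LINT x:{..0}|lborel. V x)"
  have V_int: "set_integrable lborel {..0} V"
    using nonsing by (rule nonsingular_potential_set_integrable)
  have "eventually (\<lambda>\<gamma>. \<gamma> \<le> I + sqrt (- E \<gamma>)) (at_right \<gamma>c)"
    using eventually_at_right_less[of \<gamma>c]
    by eventually_elim (use E_eig robin_negative_eigenvalue_bound[OF nonneg V_int] in \<open>auto simp: I_def\<close>)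
  moreover have "((\<lambda>\<gamma>. I + sqrt (- E \<gamma>)) \<longlongrightarrow> I + sqrt (- 0)) (at_right \<gamma>c)"
    by (intro tendsto_intros E_lim)
  ultimately have "\<gamma>c \<le> I"
    by (intro tendsto_le[OF trivial_limit_at_right_real _ tendsto_ident_at]) simp_all
  then show ?thesis
    by (simp add: I_def)
qed

end
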